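(* $B_4(n,d,w)$ equals the supremum of $\sum_{v\in F}x(\{v\})$ over all $x:\mathcal{C}_4\to\mathbb{R}$ with $x(\emptyset)=1$, $x(S)=0$ whenever $d_{\min}(S)<d$, $M_{3,D}(x)$ positive semidefinite for every $D\in\mathcal{C}_3$ with $|D|\le 1$, and $M_{4,D}(x)$ positive semidefinite for every $D\in\mathcal{C}_4$ with $|D|\in\{2,4\}$. Moreover, in both this program and the programs defining $A_4(n,d,w)$ and $B_4(n,d,w)$, every feasible $x$ satisfies $x(S)\ge 0$ for all $S\in\mathcal{C}_4$.
   Context: Notation: for a code $S\subseteq\{0,1\}^n$, $d_{\min}(S)$ is the minimum Hamming distance between distinct words of $S$ ($+\infty$ if $|S|\le 1$). Let $F\subseteq\{0,1\}^n$ be the set of words of weight $w$. $\mathcal{C}_k$ is the set of codes $C\subseteq F$ with $|C|\le k$. For $j\le k$ and $D\in\mathcal{C}_j$, $\mathcal{C}_j(D):=\{C\in\mathcal{C}_j : C\supseteq D,\ |D|+2|C\setminus D|\le j\}$. For $x:\mathcal{C}_k\to\mathbb{R}$, $M_{j,D}(x)$ is the $\mathcal{C}_j(D)\times\mathcal{C}_j(D)$ matrix with entries $x(C\cup C')$. $A_4(n,d,w)$ is the supremum of $\sum_{v\in F}x(\{v\})$ over all $x:\mathcal{C}_4\to\mathbb{R}$ with $x(\emptyset)=1$, $x(S)=0$ whenever $d_{\min}(S)<d$, and $M_{4,D}(x)$ positive semidefinite for every $D\in\mathcal{C}_4$. $B_4(n,d,w)$ is the supremum of $\sum_{v\in F}x(\{v\})$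 over all $x:\mathcal{C}_4\to\mathbb{R}$ with $x(\emptyset)=1$, $x(S)=0$ whenever $d_{\min}(S)<d$, $M_{3,D}(x)$ positive semidefinite for every $D\in\mathcal{C}_3$ with $|D|<2$, and $M_{4,D}(x)$ positive semidefinite for every $D\in\mathcal{C}_4$ with $|D|\ge 2$. *)

theory Defs
  imports Complex_Main "HOL-Library.Extended_Nat" "HOL-Library.Extended_Real"
begin

text \<open>A binary word of length n is encoded by its support, a subset of {0..<n}.
  Hamming distance = cardinality of the symmetric difference; weight = cardinality.\<close>

type_synonym word = "nat set"
type_synonym code = "nat set set"

definition hamming :: "word \<Rightarrow> word \<Rightarrow> nat" where
  "hamming u v = card ((u - v) \<union> (v - u))"

text \<open>Minimum distance; Inf of the empty set of enat is infinity.\<close>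
definition dmin :: "code \<Rightarrow> enat" where
  "dmin S = (INF p \<in> {(u, v). u \<in> S \<and> v \<in> S \<and> u \<noteq> v}. enat (hamming (fst p) (snd p)))"

definition Fw :: "nat \<Rightarrow> nat \<Rightarrow> word set" where
  "Fw n w = {v. v \<subseteq> {0..<n} \<and> card v = w}"

definition codes :: "nat \<Rightarrow> nat \<Rightarrow> nat \<Rightarrow> code set" where
  "codes n w k = {C. C \<subseteq> Fw n w \<and> card C \<le> k}"

definition codesD :: "nat \<Rightarrow> nat \<Rightarrow> nat \<Rightarrow> code \<Rightarrow> code set" where
  "codesD n w j D = {C \<in> codes n w j. D \<subseteq> C \<and> card D + 2 * card (C - D) \<le> j}"

definition psd_on :: "'i set \<Rightarrow> ('i \<Rightarrow> 'i \<Rightarrow> real) \<Rightarrow> bool" where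
  "psd_on I M \<longleftrightarrow> (\<forall>u :: 'i \<Rightarrow> real. 0 \<le> (\<Sum>i\<in>I. \<Sum>j\<in>I. u i * M i j * u j))"

definition moment_psd :: "nat \<Rightarrow> nat \<Rightarrow> (code \<Rightarrow> real) \<Rightarrow> nat \<Rightarrow> code \<Rightarrow> bool" where
  "moment_psd n w x j D \<longleftrightarrow> psd_on (codesD n w j D) (\<lambda>C C'. x (C \<union> C'))"

definition base_feasible :: "nat \<Rightarrow> nat \<Rightarrow> nat \<Rightarrow> (code \<Rightarrow> real) \<Rightarrow> bool" where
  "base_feasible n d w x \<longleftrightarrow> x {} = 1 \<and>
     (\<forall>S \<in> codes n w 4. dmin S < enat d \<longrightarrow> x S = 0)"

definition objective :: "nat \<Rightarrow> nat \<Rightarrow> (code \<Rightarrow> real) \<Rightarrow> real" where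
  "objective n w x = (\<Sum>v \<in> Fw n w. x {v})"

definition feasA :: "nat \<Rightarrow> nat \<Rightarrow> nat \<Rightarrow> (code \<Rightarrow> real) set" where
  "feasA n d w = {x. base_feasible n d w x \<and> (\<forall>D \<in> codes n w 4. moment_psd n w x 4 D)}"

definition feasB :: "nat \<Rightarrow> nat \<Rightarrow> nat \<Rightarrow> (code \<Rightarrow> real) set" where
  "feasB n d w = {x. base_feasible n d w x
     \<and> (\<forall>D \<in> codes n w 3. card D < 2 \<longrightarrow> moment_psd n w x 3 D)
     \<and> (\<forall>D \<in> codes n w 4. card D \<ge> 2 \<longrightarrow> moment_psd n w x 4 D)}"

definition feasB' :: "nat \<Rightarrow> nat \<Rightarrow> nat \<Rightarrow> (code \<Rightarrow> real) set" where
  "feasB' n d w = {x. base_feasible n d w x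
     \<and> (\<forall>D \<in> codes n w 3. card D \<le> 1 \<longrightarrow> moment_psd n w x 3 D)
     \<and> (\<forall>D \<in> codes n w 4. card D \<in> {2, 4} \<longrightarrow> moment_psd n w x 4 D)}"

text \<open>Suprema taken in the extended reals (so they are always defined).\<close>
definition A4 :: "nat \<Rightarrow> nat \<Rightarrow> nat \<Rightarrow> ereal" where
  "A4 n d w = Sup ((\<lambda>x. ereal (objective n w x)) ` feasA n d w)"

definition B4 :: "nat \<Rightarrow> nat \<Rightarrow> nat \<Rightarrow> ereal" where
  "B4 n d w = Sup ((\<lambda>x. ereal (objective n w x)) ` feasB n d w)"

end

theory Submission
  imports Defs
begin

text \<open>The diagonal entry of M_{j,D}(x) at C is x(C), so positive semidefiniteness forces
  x(S) \<ge> 0 for every S occurring as a row index. Each S of size \<le> 4 does so in all three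
  programs: |S| \<le> 1 in M_{3,S}, |S| \<in> {2,4} in M_{4,S}, and |S| = 3 in M_{4,D} for any
  2-subset D of S. Conversely, for |D| = 3 the index set C_4(D) is just {D}, so M_{4,D}(x) is
  the 1\<times>1 matrix (x(D)) and its constraint is implied by x(D) \<ge> 0; dropping it does not
  change the feasible set of B_4.\<close>

lemma finite_Fw: "finite (Fw n w)"
  unfolding Fw_def by (rule finite_subset[of _ "Pow {0..<n}"]) auto

lemma finite_code: "C \<in> codes n w k \<Longrightarrow> finite C"
  unfolding codes_def using finite_Fw finite_subset by blast

lemma finite_codesD: "finite (codesD n w j D)"
proof -
  have "codesD n w j D \<subseteq> Pow (Fw n w)" unfolding codesD_def codes_def by auto
  then show ?thesis using finite_Fw finite_subset by blast
qed

lemma psd_on_diag_nonneg: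
  assumes "psd_on I M" "finite I" "i \<in> I"
  shows "0 \<le> M i i"
proof -
  define u where "u = (\<lambda>j. if j = i then (1::real) else 0)"
  have "0 \<le> (\<Sum>a\<in>I. \<Sum>b\<in>I. u a * M a b * u b)"
    using assms(1) unfolding psd_on_def by blast
  also have "\<dots> = (\<Sum>a\<in>I. if a = i then M i i else 0)"
    by (rule sum.cong) (auto simp: u_def assms if_distrib cong: if_cong)
  also have "\<dots> = M i i" using assms by simp
  finally show ?thesis .
qed

lemma psd_on_singleton_iff: "psd_on {i} M \<longleftrightarrow> 0 \<le> M i i"
proof
  assume "0 \<le> M i i"
  then show "psd_on {i} M"
    unfolding psd_on_def by (simp add: mult.commute[of _ "M i i"] mult.assoc)
qed (simp add: psd_on_diag_nonneg)

lemma moment_psd_nonneg: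
  assumes "moment_psd n w x j D" "C \<in> codesD n w j D"
  shows "0 \<le> x C"
  using psd_on_diag_nonneg[OF assms(1)[unfolded moment_psd_def] finite_codesD assms(2)] by simp

lemma self_mem_codesD: "S \<in> codes n w j \<Longrightarrow> S \<in> codesD n w j S"
  unfolding codesD_def codes_def by auto

lemma codes_mono: "S \<in> codes n w k \<Longrightarrow> card S \<le> j \<Longrightarrow> S \<in> codes n w j"
  unfolding codes_def by auto

lemma codesD_eq_singleton:
  assumes "D \<in> codes n w j" "j < card D + 2"
  shows "codesD n w j D = {D}"
proof
  show "{D} \<subseteq> codesD n w j D" using self_mem_codesD[OF assms(1)] by simp
next
  show "codesD n w j D \<subseteq> {D}"
  proof
    fix C assume C: "C \<in> codesD n w j D"
    then have "D \<subseteq> C" "card (C - D) = 0" "finite C"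
      using assms unfolding codesD_def by (auto intro: finite_code)
    then show "C \<in> {D}" by auto
  qed
qed

lemma triple_mem_codesD_of_pair:
  assumes S: "S \<in> codes n w 4" "card S = 3"
  obtains D where "D \<in> codes n w 4" "card D = 2" "S \<in> codesD n w 4 D"
proof -
  obtain D where D: "D \<subseteq> S" "card D = 2"
    using obtain_subset_with_card_n[of 2 S] S(2) by auto
  have "card (S - D) = 1"
    using card_Diff_subset[OF _ D(1)] D S(2) finite_subset[OF D(1) finite_code[OF S(1)]] by simp
  then have "S \<in> codesD n w 4 D" using S D unfolding codesD_def by auto
  moreover have "D \<in> codes n w 4" using S(1) D unfolding codes_def by auto
  ultimately show ?thesis using that D by blast
qed

lemma feasA_nonneg:
  assumes "x \<in> feasA n d w" "S \<in> codes n w 4"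
  shows "0 \<le> x S"
  using assms moment_psd_nonneg self_mem_codesD unfolding feasA_def by blast

lemma feasB'_nonneg:
  assumes x: "x \<in> feasB' n d w" and S: "S \<in> codes n w 4"
  shows "0 \<le> x S"
proof -
  have psd3: "\<And>D. D \<in> codes n w 3 \<Longrightarrow> card D \<le> 1 \<Longrightarrow> moment_psd n w x 3 D"
   and psd4: "\<And>D. D \<in> codes n w 4 \<Longrightarrow> card D \<in> {2, 4} \<Longrightarrow> moment_psd n w x 4 D"
    using x unfolding feasB'_def by auto
  have "card S \<le> 4" using S unfolding codes_def by auto
  then consider "card S \<le> 1" | "card S \<in> {2, 4}" | "card S = 3" by fastforce
  then show ?thesis
  proof cases
    case 1
    then have "S \<in> codes n w 3" using codes_mono[OF S] by simp
    then show ?thesis using moment_psd_nonneg psd3 self_mem_codesD 1 by blast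
  next
    case 2
    then show ?thesis using moment_psd_nonneg psd4 self_mem_codesD S by blast
  next
    case 3
    then obtain D where "D \<in> codes n w 4" "card D = 2" "S \<in> codesD n w 4 D"
      using triple_mem_codesD_of_pair[OF S] by blast
    then show ?thesis using moment_psd_nonneg psd4 by fastforce
  qed
qed

lemma feasB_eq_feasB': "feasB n d w = feasB' n d w"
proof
  show "feasB n d w \<subseteq> feasB' n d w" unfolding feasB'_def feasB_def by auto
next
  show "feasB' n d w \<subseteq> feasB n d w"
  proof
    fix x assume x: "x \<in> feasB' n d w"
    have "moment_psd n w x 4 D" if D: "D \<in> codes n w 4" "2 \<le> card D" for D
    proof (cases "card D = 3")
      case True
      then have "codesD n w 4 D = {D}" using codesD_eq_singleton[OF D(1)] by simp
      then show ?thesis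
        using feasB'_nonneg[OF x D(1)] unfolding moment_psd_def by (simp add: psd_on_singleton_iff)
    next
      case False
      have "card D \<le> 4" using D unfolding codes_def by auto
      with False D x show ?thesis unfolding feasB'_def by auto
    qed
    with x show "x \<in> feasB n d w" unfolding feasB'_def feasB_def by auto
  qed
qed

theorem mainTheorem6:
  fixes n d w :: nat
  shows "B4 n d w = Sup ((\<lambda>x. ereal (objective n w x)) ` feasB' n d w)
    \<and> (\<forall>x \<in> feasA n d w \<union> feasB n d w \<union> feasB' n d w.
         \<forall>S \<in> codes n w 4. 0 \<le> x S)"
  using feasB_eq_feasB' feasA_nonneg feasB'_nonneg unfolding B4_def by auto

end
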